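(* The collineation $\phi$ permutes the elements of $\mathrm{orb}(\mathsf S_T)$, and it maps each element to an element of the same one of the following seven categories: (1) the singletons $\{T\},\{T^\phi\},\{T^{\phi^2}\}$; (2) Type-II slses (i.e. Type-II-$T$-, $T^\phi$- or $T^{\phi^2}$-slses); (3) Type-III slses; (4) $\mathcal P_{2,q}$; (5) $\mathbb{F}_q$-planes in $\mathrm{orb}(\mathsf S_T)$ with only Type II points and only Type III lines; (6) $\mathbb{F}_q$-planes in $\mathrm{orb}(\mathsf S_T)$ with only Type III points and only Type II lines; (7) $\mathbb{F}_q$-planes in $\mathrm{orb}(\mathsf S_T)$ with only Type III points and only Type III lines.
   Context: Let $q$ be a prime power, $\mathbb{F}_{q^3}^*=\mathbb{F}_{q^3}\setminus\{0\}$. Points of $\mathrm{PG}(2,q^3)$ have homogeneous coordinates $(x,y,z)$ and lines $[a,b,c]$. An $\mathbb{F}_q$-plane is a subplane of order $q$; its lines are those meeting it in $q+1$ points. Let $\phi$ be the collineation $(x,y,z)\mapsto(z^q,x^q,y^q)$ (on lines $[d,e,f]\mapsto[f^q,d^q,e^q]$), whose fixed points form $\mathcal P_{2,q}=\{(x,x^q,x^{q^2}):x\in\mathbb{F}_{q^3}^*\}$. A point has Type I, II, III according as its $\phi$-orbit is one point, three collinear points, three non-collinear points; a line has Type I, II, III according as its $\phi$-orbit is one line, three concurrent lines, three non-concurrent lines. Let $T=(0,0,1)$, $T^\phi=(1,0,0)$, $T^{\phi^2}=(0,1,0)$. Let $\psi_t:(x,y,z)\mapsto(tx,t^qy,t^{q^2}z)$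 for $t\in\mathbb{F}_{q^3}^*$, $\mathsf S_T=\{\psi_t\}$, and $\mathrm{orb}(\mathsf S_T)$ the set of point orbits of $\mathsf S_T$. Orbits of size $q^2+q+1$ contained in the line $T^\phi T^{\phi^2}$ (resp. $T^{\phi^2}T$, $TT^\phi$) are $T$-slses (resp. $T^\phi$-slses, $T^{\phi^2}$-slses); such an sls is Type-X if all its points have Type X. The remaining orbits other than $\{T\},\{T^\phi\},\{T^{\phi^2}\}$ are $\mathbb{F}_q$-planes. *)

theory Defs
  imports "HOL-Computational_Algebra.Primes"
begin

(* Vectors of F_{q^3}^3; a projective point (or line) is the set of nonzero
   scalar multiples of a nonzero vector. *)
type_synonym 'a vec3 = "'a \<times> 'a \<times> 'a"

definition smult3 :: "'a::field \<Rightarrow> 'a vec3 \<Rightarrow> 'a vec3" where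
  "smult3 c v = (case v of (x,y,z) \<Rightarrow> (c*x, c*y, c*z))"

definition pt :: "'a::field vec3 \<Rightarrow> 'a vec3 set" where
  "pt v = {smult3 c v | c. c \<noteq> 0}"

definition points :: "'a::field vec3 set set" where
  "points = {pt v | v. v \<noteq> (0,0,0)}"

abbreviation lines :: "'a::field vec3 set set" where
  "lines \<equiv> points"

definition dot3 :: "'a::field vec3 \<Rightarrow> 'a vec3 \<Rightarrow> 'a" where
  "dot3 v w = (case v of (x,y,z) \<Rightarrow> case w of (a,b,c) \<Rightarrow> a*x + b*y + c*z)"

definition inc :: "'a::field vec3 set \<Rightarrow> 'a vec3 set \<Rightarrow> bool" where
  "inc P L \<longleftrightarrow> (\<exists>v\<in>P. \<exists>w\<in>L. dot3 v w = 0)"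

definition line_pts :: "'a::field vec3 set \<Rightarrow> 'a vec3 set set" where
  "line_pts L = {P \<in> points. inc P L}"

definition collinear3 :: "'a::field vec3 set \<Rightarrow> 'a vec3 set \<Rightarrow> 'a vec3 set \<Rightarrow> bool" where
  "collinear3 P Q R \<longleftrightarrow> (\<exists>L\<in>lines. inc P L \<and> inc Q L \<and> inc R L)"

definition concurrent3 :: "'a::field vec3 set \<Rightarrow> 'a vec3 set \<Rightarrow> 'a vec3 set \<Rightarrow> bool" where
  "concurrent3 L M N \<longleftrightarrow> (\<exists>P\<in>points. inc P L \<and> inc P M \<and> inc P N)"

(* the collineation phi: (x,y,z) -> (z^q,x^q,y^q); on lines [d,e,f] -> [f^q,d^q,e^q],
   which is given by the same formula *)
definition phiv :: "nat \<Rightarrow> 'a::field vec3 \<Rightarrow> 'a vec3" where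
  "phiv q v = (case v of (x,y,z) \<Rightarrow> (z^q, x^q, y^q))"

definition phi :: "nat \<Rightarrow> 'a::field vec3 set \<Rightarrow> 'a vec3 set" where
  "phi q P = phiv q ` P"

definition psiv :: "nat \<Rightarrow> 'a::field \<Rightarrow> 'a vec3 \<Rightarrow> 'a vec3" where
  "psiv q t v = (case v of (x,y,z) \<Rightarrow> (t*x, t^q*y, t^(q^2)*z))"

definition psi :: "nat \<Rightarrow> 'a::field \<Rightarrow> 'a vec3 set \<Rightarrow> 'a vec3 set" where
  "psi q t P = psiv q t ` P"

definition ST_orbit :: "nat \<Rightarrow> 'a::field vec3 set \<Rightarrow> 'a vec3 set set" where
  "ST_orbit q P = {psi q t P | t. t \<noteq> 0}"

definition orbST :: "nat \<Rightarrow> 'a::field vec3 set set set" where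
  "orbST q = {ST_orbit q P | P. P \<in> points}"

definition pt_type1 :: "nat \<Rightarrow> 'a::field vec3 set \<Rightarrow> bool" where
  "pt_type1 q P \<longleftrightarrow> phi q P = P"

definition pt_type2 :: "nat \<Rightarrow> 'a::field vec3 set \<Rightarrow> bool" where
  "pt_type2 q P \<longleftrightarrow> card {P, phi q P, phi q (phi q P)} = 3
      \<and> collinear3 P (phi q P) (phi q (phi q P))"

definition pt_type3 :: "nat \<Rightarrow> 'a::field vec3 set \<Rightarrow> bool" where
  "pt_type3 q P \<longleftrightarrow> card {P, phi q P, phi q (phi q P)} = 3
      \<and> \<not> collinear3 P (phi q P) (phi q (phi q P))"

definition ln_type1 :: "nat \<Rightarrow> 'a::field vec3 set \<Rightarrow> bool" where
  "ln_type1 q L \<longleftrightarrow> phi q L = L"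

definition ln_type2 :: "nat \<Rightarrow> 'a::field vec3 set \<Rightarrow> bool" where
  "ln_type2 q L \<longleftrightarrow> card {L, phi q L, phi q (phi q L)} = 3
      \<and> concurrent3 L (phi q L) (phi q (phi q L))"

definition ln_type3 :: "nat \<Rightarrow> 'a::field vec3 set \<Rightarrow> bool" where
  "ln_type3 q L \<longleftrightarrow> card {L, phi q L, phi q (phi q L)} = 3
      \<and> \<not> concurrent3 L (phi q L) (phi q (phi q L))"

(* the points T, T^phi, T^phi^2 *)
definition T0 :: "'a::field vec3 set" where "T0 = pt (0,0,1)"
definition T1 :: "'a::field vec3 set" where "T1 = pt (1,0,0)"
definition T2 :: "'a::field vec3 set" where "T2 = pt (0,1,0)"

definition in_line_through :: "'a::field vec3 set set \<Rightarrow> 'a vec3 set \<Rightarrow> 'a vec3 set \<Rightarrow> bool" where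
  "in_line_through X A B \<longleftrightarrow> (\<exists>L\<in>lines. inc A L \<and> inc B L \<and> (\<forall>P\<in>X. inc P L))"

definition T_sls :: "nat \<Rightarrow> 'a::field vec3 set set \<Rightarrow> bool" where
  "T_sls q X \<longleftrightarrow> X \<in> orbST q \<and> card X = q^2+q+1 \<and> in_line_through X T1 T2"

definition Tphi_sls :: "nat \<Rightarrow> 'a::field vec3 set set \<Rightarrow> bool" where
  "Tphi_sls q X \<longleftrightarrow> X \<in> orbST q \<and> card X = q^2+q+1 \<and> in_line_through X T2 T0"

definition Tphi2_sls :: "nat \<Rightarrow> 'a::field vec3 set set \<Rightarrow> bool" where
  "Tphi2_sls q X \<longleftrightarrow> X \<in> orbST q \<and> card X = q^2+q+1 \<and> in_line_through X T0 T1"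

definition sls :: "nat \<Rightarrow> 'a::field vec3 set set \<Rightarrow> bool" where
  "sls q X \<longleftrightarrow> T_sls q X \<or> Tphi_sls q X \<or> Tphi2_sls q X"

definition P2q :: "nat \<Rightarrow> 'a::field vec3 set set" where
  "P2q q = {pt (x, x^q, x^(q^2)) | x. x \<noteq> 0}"

definition Fq_plane :: "nat \<Rightarrow> 'a::field vec3 set set \<Rightarrow> bool" where
  "Fq_plane q S \<longleftrightarrow> S \<subseteq> points
     \<and> (\<exists>A B C D. {A,B,C,D} \<subseteq> S \<and> card {A,B,C,D} = 4 \<and>
          \<not> collinear3 A B C \<and> \<not> collinear3 A B D \<and> \<not> collinear3 A C D \<and> \<not> collinear3 B C D)
     \<and> (\<forall>L\<in>lines. \<forall>M\<in>lines. L \<noteq> M \<and> card (line_pts L \<inter> S) \<ge> 2 \<and> card (line_pts M \<inter> S) \<ge> 2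
          \<longrightarrow> (\<forall>P\<in>points. inc P L \<and> inc P M \<longrightarrow> P \<in> S))
     \<and> (\<forall>L\<in>lines. card (line_pts L \<inter> S) \<ge> 2 \<longrightarrow> card (line_pts L \<inter> S) = q + 1)"

definition plane_lines :: "nat \<Rightarrow> 'a::field vec3 set set \<Rightarrow> 'a vec3 set set" where
  "plane_lines q S = {L \<in> lines. card (line_pts L \<inter> S) = q + 1}"

definition cat1 :: "'a::field vec3 set set \<Rightarrow> bool" where
  "cat1 X \<longleftrightarrow> X = {T0} \<or> X = {T1} \<or> X = {T2}"

definition cat2 :: "nat \<Rightarrow> 'a::field vec3 set set \<Rightarrow> bool" where
  "cat2 q X \<longleftrightarrow> sls q X \<and> (\<forall>P\<in>X. pt_type2 q P)"

definition cat3 :: "nat \<Rightarrow> 'a::field vec3 set set \<Rightarrow> bool" where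
  "cat3 q X \<longleftrightarrow> sls q X \<and> (\<forall>P\<in>X. pt_type3 q P)"

definition cat4 :: "nat \<Rightarrow> 'a::field vec3 set set \<Rightarrow> bool" where
  "cat4 q X \<longleftrightarrow> X = P2q q"

definition cat5 :: "nat \<Rightarrow> 'a::field vec3 set set \<Rightarrow> bool" where
  "cat5 q X \<longleftrightarrow> X \<in> orbST q \<and> Fq_plane q X \<and> (\<forall>P\<in>X. pt_type2 q P)
      \<and> (\<forall>L\<in>plane_lines q X. ln_type3 q L)"

definition cat6 :: "nat \<Rightarrow> 'a::field vec3 set set \<Rightarrow> bool" where
  "cat6 q X \<longleftrightarrow> X \<in> orbST q \<and> Fq_plane q X \<and> (\<forall>P\<in>X. pt_type3 q P)
      \<and> (\<forall>L\<in>plane_lines q X. ln_type2 q L)"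

definition cat7 :: "nat \<Rightarrow> 'a::field vec3 set set \<Rightarrow> bool" where
  "cat7 q X \<longleftrightarrow> X \<in> orbST q \<and> Fq_plane q X \<and> (\<forall>P\<in>X. pt_type3 q P)
      \<and> (\<forall>L\<in>plane_lines q X. ln_type3 q L)"

end

theory Submission
  imports Defs "HOL-Number_Theory.Residues"
begin

text \<open>
  Because \<open>x \<mapsto> x ^ q\<close> is a field automorphism with \<open>x ^ q\<^sup>3 = x\<close>, \<open>\<phi>\<close> is a
  collineation of order three commuting with every \<open>\<psi>\<^sub>t\<close>, so it permutes the
  \<open>S\<^sub>T\<close>-orbits. The seven categories are defined through incidence, cardinality,
  the \<open>\<phi>\<close>-orbit types of points and lines (invariant because \<open>\<phi>\<close> only rotates each
  \<open>\<phi>\<close>-orbit), the triangle \<open>T, T\<^sup>\<phi>, T\<^sup>\<phi>\<^sup>2\<close> (rotated by \<open>\<phi>\<close>) and \<open>P\<^sub>2\<^sub>,\<^sub>q\<close>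
  (fixed pointwise by \<open>\<phi>\<close>), so each category is \<open>\<phi>\<close>-invariant.
\<close>

lemma finite_field_power_card:
  fixes x :: "'a::{finite,field}"
  shows "x ^ card (UNIV :: 'a set) = x"
proof (cases "x = 0")
  case False
  \<comment> \<open>The library's \<open>finite_field_power_card_eq_same\<close> needs the sort \<open>finite_field\<close>;
     here Lagrange's theorem is applied to the multiplicative group directly.\<close>
  define G :: "'a monoid" where "G = \<lparr>carrier = UNIV - {0}, monoid.mult = (*), one = 1\<rparr>"
  interpret group G
  proof (rule groupI)
    show "\<exists>y\<in>carrier G. y \<otimes>\<^bsub>G\<^esub> z = \<one>\<^bsub>G\<^esub>" if "z \<in> carrier G" for z
      using that by (intro bexI[of _ "inverse z"]) (auto simp: G_def)
  qed (auto simp: G_def mult.assoc)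
  have pow: "x [^]\<^bsub>G\<^esub> n = x ^ n" for n :: nat
    by (induction n) (simp_all add: G_def power_Suc2)
  have "order G = card (UNIV :: 'a set) - 1"
    by (simp add: order_def G_def card_Diff_singleton)
  then have "x ^ (card (UNIV :: 'a set) - 1) = x [^]\<^bsub>G\<^esub> order G"
    by (simp add: pow)
  also have "\<dots> = 1"
    using pow_order_eq_1[of x] False by (simp add: G_def)
  finally have "x ^ (card (UNIV :: 'a set) - 1) = 1" .
  then show ?thesis
    using finite_UNIV_card_ge_0[where 'a='a] by (cases "card (UNIV :: 'a set)") simp_all
qed (simp add: finite_UNIV_card_ge_0)

lemma frobenius_additive:
  fixes x y :: "'a::{finite,field}"
  assumes "prime p" and "card (UNIV :: 'a set) = p ^ m" and "q = p ^ k"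
  shows "(x + y) ^ q = x ^ q + y ^ q"
proof -
  have char_prime: "prime CHAR('a)"
    by (rule prime_CHAR_semidom) (simp add: finite_imp_CHAR_pos)
  have "CHAR('a) dvd p ^ m"
    using CHAR_dvd_CARD[where 'a='a] assms(2) by simp
  then have "CHAR('a) = p"
    using char_prime assms(1) prime_dvd_power primes_dvd_imp_eq by blast
  then show ?thesis
    using freshmans_dream'[OF char_prime] assms(3) by simp
qed

lemma collinear3_rotate: "collinear3 B C A \<longleftrightarrow> collinear3 A B C"
  unfolding collinear3_def by blast

lemma concurrent3_rotate: "concurrent3 B C A \<longleftrightarrow> concurrent3 A B C"
  unfolding concurrent3_def by blast

locale collineation =
  fixes f :: "'a::field vec3 set \<Rightarrow> 'a vec3 set"
  assumes bij_f: "bij f"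
    and points_iff [simp]: "f P \<in> points \<longleftrightarrow> P \<in> points"
    and inc_iff [simp]: "inc (f P) (f L) \<longleftrightarrow> inc P L"
begin

lemma inj_iff [simp]: "f P = f Q \<longleftrightarrow> P = Q"
  using bij_f by (simp add: bij_def inj_eq)

lemma card_image_eq: "card (f ` A) = card A"
  by (rule card_image) (simp add: inj_on_def)

lemma preimageE:
  obtains P' where "P = f P'"
  using surjD[OF bij_is_surj[OF bij_f]] by blast

lemma bex_points: "(\<exists>P\<in>points. Q (f P)) \<longleftrightarrow> (\<exists>P\<in>points. Q P)"
proof
  assume "\<exists>P\<in>points. Q P"
  then obtain P where "P \<in> points" "Q P" by blast
  moreover obtain P' where "P = f P'" by (rule preimageE)
  ultimately show "\<exists>P\<in>points. Q (f P)" by auto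
qed auto

lemma collinear3_image: "collinear3 (f A) (f B) (f C) \<longleftrightarrow> collinear3 A B C"
  unfolding collinear3_def
    bex_points[of "\<lambda>L. inc (f A) L \<and> inc (f B) L \<and> inc (f C) L", symmetric]
  by simp

lemma line_pts_image: "line_pts (f L) = f ` line_pts L"
proof (intro equalityI subsetI)
  fix P assume "P \<in> line_pts (f L)"
  moreover obtain P' where "P = f P'" by (rule preimageE)
  ultimately show "P \<in> f ` line_pts L"
    by (auto simp: line_pts_def)
qed (auto simp: line_pts_def)

lemma card_line_pts_Int_image: "card (line_pts (f L) \<inter> f ` S) = card (line_pts L \<inter> S)"
proof -
  have "line_pts (f L) \<inter> f ` S = f ` (line_pts L \<inter> S)"
    by (auto simp: line_pts_image)
  then show ?thesis
    by (simp add: card_image_eq)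
qed

lemma plane_lines_image: "plane_lines q (f ` S) = f ` plane_lines q S"
proof (intro equalityI subsetI)
  fix L assume "L \<in> plane_lines q (f ` S)"
  moreover obtain L' where "L = f L'" by (rule preimageE)
  ultimately show "L \<in> f ` plane_lines q S"
    by (auto simp: plane_lines_def card_line_pts_Int_image)
qed (auto simp: plane_lines_def card_line_pts_Int_image)

lemma in_line_through_image:
  assumes "in_line_through X A B"
  shows "in_line_through (f ` X) (f A) (f B)"
proof -
  obtain L where "L \<in> lines" "inc A L" "inc B L" "\<forall>P\<in>X. inc P L"
    using assms unfolding in_line_through_def by blast
  then show ?thesis
    unfolding in_line_through_def by (intro bexI[of _ "f L"]) auto
qed

lemma Fq_plane_image:
  assumes S: "Fq_plane q S"
  shows "Fq_plane q (f ` S)"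
proof -
  obtain A B C D where ABCD: "{A,B,C,D} \<subseteq> S" "card {A,B,C,D} = 4"
    "\<not> collinear3 A B C" "\<not> collinear3 A B D" "\<not> collinear3 A C D" "\<not> collinear3 B C D"
    using S unfolding Fq_plane_def by (elim conjE exE) blast
  have "card {f A, f B, f C, f D} = 4"
    using ABCD(2) card_image_eq[of "{A,B,C,D}"] by simp
  have closed: "P \<in> f ` S"
    if "L \<in> lines" "M \<in> lines" "L \<noteq> M" "card (line_pts L \<inter> f ` S) \<ge> 2"
      "card (line_pts M \<inter> f ` S) \<ge> 2" "P \<in> points" "inc P L" "inc P M" for L M P
  proof -
    obtain L' M' P' where "L = f L'" "M = f M'" "P = f P'"
      using preimageE by meson
    with that S show ?thesis
      unfolding Fq_plane_def by (auto simp: card_line_pts_Int_image)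
  qed
  have line_card: "card (line_pts L \<inter> f ` S) = q + 1"
    if "L \<in> lines" "card (line_pts L \<inter> f ` S) \<ge> 2" for L
  proof -
    obtain L' where "L = f L'" by (rule preimageE)
    with that S show ?thesis
      unfolding Fq_plane_def by (auto simp: card_line_pts_Int_image)
  qed
  show ?thesis
    unfolding Fq_plane_def
  proof (intro conjI ballI impI allI)
    show "f ` S \<subseteq> points" using S unfolding Fq_plane_def by auto
    show "\<exists>A B C D. {A,B,C,D} \<subseteq> f ` S \<and> card {A,B,C,D} = 4 \<and>
          \<not> collinear3 A B C \<and> \<not> collinear3 A B D \<and> \<not> collinear3 A C D \<and> \<not> collinear3 B C D"
      using ABCD \<open>card {f A, f B, f C, f D} = 4\<close>
      by (intro exI[of _ "f A"] exI[of _ "f B"] exI[of _ "f C"] exI[of _ "f D"])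
        (simp add: collinear3_image)
  qed (use closed line_card in blast)+
qed

end

locale cubic_frobenius =
  fixes q :: nat and field_type :: "'a::field itself"
  assumes power_q_cube: "(x::'a) ^ (q ^ 3) = x"
    and power_q_add: "((x::'a) + y) ^ q = x ^ q + y ^ q"
begin

lemma q_pos: "q > 0"
  using power_q_cube[of 0] by (cases q) simp_all

lemma power_q_q_q: "(((x::'a) ^ q) ^ q) ^ q = x"
  using power_q_cube[of x] by (simp add: power3_eq_cube flip: power_mult)

lemma power_q2_q: "((x::'a) ^ (q ^ 2)) ^ q = x"
  using power_q_q_q[of x] by (simp add: power2_eq_square power_mult)

lemma phiv_order3 [simp]: "phiv q (phiv q (phiv q (v::'a vec3))) = v"
  by (cases v) (simp add: phiv_def power_q_q_q)

lemma phi_order3 [simp]: "phi q (phi q (phi q (P::'a vec3 set))) = P"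
  by (simp add: phi_def image_image)

lemma phiv_smult3: "phiv q (smult3 c v) = smult3 (c ^ q) (phiv q (v::'a vec3))"
  by (cases v) (simp add: phiv_def smult3_def power_mult_distrib)

lemma phi_pt: "phi q (pt (v::'a vec3)) = pt (phiv q v)"
proof (intro equalityI subsetI)
  fix w
  assume "w \<in> phi q (pt v)"
  then obtain c :: 'a where "c \<noteq> 0" "w = smult3 (c ^ q) (phiv q v)"
    unfolding phi_def pt_def by (auto simp: phiv_smult3)
  then show "w \<in> pt (phiv q v)"
    unfolding pt_def by auto
next
  fix w
  assume "w \<in> pt (phiv q v)"
  then obtain d :: 'a where "d \<noteq> 0" "w = smult3 d (phiv q v)"
    unfolding pt_def by blast
  then have "w = phiv q (smult3 (d ^ (q ^ 2)) v)" "smult3 (d ^ (q ^ 2)) v \<in> pt v"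
    unfolding pt_def by (auto simp: phiv_smult3 power_q2_q)
  then show "w \<in> phi q (pt v)"
    unfolding phi_def by blast
qed

lemma phi_points:
  assumes "P \<in> points"
  shows "phi q (P::'a vec3 set) \<in> points"
proof -
  obtain v where "v \<noteq> (0,0,0)" "P = pt v"
    using assms unfolding points_def by blast
  moreover have "phiv q v \<noteq> (0,0,0)"
    using calculation q_pos by (cases v) (auto simp: phiv_def)
  ultimately show ?thesis
    unfolding points_def by (simp only: phi_pt) blast
qed

lemma dot3_phiv: "dot3 (phiv q v) (phiv q (w::'a vec3)) = dot3 v w ^ q"
  by (cases v, cases w) (simp add: dot3_def phiv_def power_q_add power_mult_distrib ac_simps)

lemma inc_phi: "inc P L \<Longrightarrow> inc (phi q (P::'a vec3 set)) (phi q L)"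
  using q_pos unfolding inc_def phi_def by (force simp: dot3_phiv)

sublocale collineation "phi q :: 'a vec3 set \<Rightarrow> 'a vec3 set"
proof
  show "bij (phi q :: 'a vec3 set \<Rightarrow> 'a vec3 set)"
    by (rule o_bij[of "phi q \<circ> phi q"]) auto
  show "phi q P \<in> points \<longleftrightarrow> P \<in> points" for P :: "'a vec3 set"
    by (metis phi_order3 phi_points)
  show "inc (phi q P) (phi q L) \<longleftrightarrow> inc P L" for P L :: "'a vec3 set"
    by (metis phi_order3 inc_phi)
qed

lemma phi_orbit_rotate:
  "{phi q P, phi q (phi q P), phi q (phi q (phi q P))} = {P, phi q P, phi q (phi q (P::'a vec3 set))}"
  by auto

lemma pt_type2_phi [simp]: "pt_type2 q (phi q (P::'a vec3 set)) \<longleftrightarrow> pt_type2 q P"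
  unfolding pt_type2_def phi_orbit_rotate by (simp add: collinear3_rotate)

lemma pt_type3_phi [simp]: "pt_type3 q (phi q (P::'a vec3 set)) \<longleftrightarrow> pt_type3 q P"
  unfolding pt_type3_def phi_orbit_rotate by (simp add: collinear3_rotate)

lemma ln_type2_phi [simp]: "ln_type2 q (phi q (L::'a vec3 set)) \<longleftrightarrow> ln_type2 q L"
  unfolding ln_type2_def phi_orbit_rotate by (simp add: concurrent3_rotate)

lemma ln_type3_phi [simp]: "ln_type3 q (phi q (L::'a vec3 set)) \<longleftrightarrow> ln_type3 q L"
  unfolding ln_type3_def phi_orbit_rotate by (simp add: concurrent3_rotate)

lemma phi_psi: "phi q (psi q t P) = psi q t (phi q (P::'a vec3 set))"
proof -
  have "phiv q (psiv q t v) = psiv q t (phiv q v)" for v :: "'a vec3"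
    by (cases v) (simp add: phiv_def psiv_def power_mult_distrib power_q_q_q
        power2_eq_square power_mult)
  then show ?thesis
    by (simp add: phi_def psi_def image_image)
qed

lemma phi_image_ST_orbit: "phi q ` ST_orbit q P = ST_orbit q (phi q (P::'a vec3 set))"
proof -
  have "ST_orbit q P = (\<lambda>t. psi q t P) ` {t. t \<noteq> 0}" for P :: "'a vec3 set"
    by (auto simp: ST_orbit_def)
  then show ?thesis
    by (simp add: image_image phi_psi)
qed

lemma phi_image_orbST: "X \<in> orbST q \<Longrightarrow> phi q ` X \<in> (orbST q :: 'a vec3 set set set)"
  unfolding orbST_def using phi_image_ST_orbit points_iff by blast

lemma bij_betw_phi_image_orbST:
  "bij_betw (\<lambda>X. phi q ` X) (orbST q :: 'a vec3 set set set) (orbST q)"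
proof (rule bij_betw_byWitness[where f' = "\<lambda>X. phi q ` phi q ` X"])
  show "(\<lambda>X. phi q ` phi q ` X) ` orbST q \<subseteq> (orbST q :: 'a vec3 set set set)"
    using phi_image_orbST by blast
qed (auto simp: image_image phi_image_orbST)

lemma phi_triangle [simp]:
  "phi q T0 = (T1 :: 'a vec3 set)" "phi q T1 = (T2 :: 'a vec3 set)" "phi q T2 = (T0 :: 'a vec3 set)"
  using q_pos by (simp_all add: T0_def T1_def T2_def phi_pt phiv_def power_0_left)

lemma phi_fixes_P2q: "P \<in> P2q q \<Longrightarrow> phi q P = (P :: 'a vec3 set)"
  by (auto simp: P2q_def phi_pt phiv_def power_q_q_q power2_eq_square power_mult)

lemma sls_phi_image: "sls q X \<Longrightarrow> sls q (phi q ` (X :: 'a vec3 set set))"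
  using in_line_through_image[of X T0 T1] in_line_through_image[of X T1 T2]
    in_line_through_image[of X T2 T0] phi_image_orbST[of X]
  by (auto simp: sls_def T_sls_def Tphi_sls_def Tphi2_sls_def card_image_eq)

lemma cat1_phi_image: "cat1 X \<Longrightarrow> cat1 (phi q ` (X :: 'a vec3 set set))"
  by (auto simp: cat1_def)

lemma cat2_phi_image: "cat2 q X \<Longrightarrow> cat2 q (phi q ` (X :: 'a vec3 set set))"
  by (auto simp: cat2_def sls_phi_image)

lemma cat3_phi_image: "cat3 q X \<Longrightarrow> cat3 q (phi q ` (X :: 'a vec3 set set))"
  by (auto simp: cat3_def sls_phi_image)

lemma cat4_phi_image: "cat4 q X \<Longrightarrow> cat4 q (phi q ` (X :: 'a vec3 set set))"
  by (simp add: cat4_def phi_fixes_P2q)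

lemma cat5_phi_image: "cat5 q X \<Longrightarrow> cat5 q (phi q ` (X :: 'a vec3 set set))"
  by (auto simp: cat5_def phi_image_orbST Fq_plane_image plane_lines_image)

lemma cat6_phi_image: "cat6 q X \<Longrightarrow> cat6 q (phi q ` (X :: 'a vec3 set set))"
  by (auto simp: cat6_def phi_image_orbST Fq_plane_image plane_lines_image)

lemma cat7_phi_image: "cat7 q X \<Longrightarrow> cat7 q (phi q ` (X :: 'a vec3 set set))"
  by (auto simp: cat7_def phi_image_orbST Fq_plane_image plane_lines_image)

end

theorem lemma3p1:
  fixes q :: nat
  assumes "\<exists>p k. prime p \<and> k \<ge> 1 \<and> q = p ^ k"
    and "card (UNIV :: 'a::{finite,field} set) = q ^ 3"
  shows "bij_betw (\<lambda>X. phi q ` X) (orbST q :: 'a vec3 set set set) (orbST q)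
    \<and> (\<forall>X \<in> (orbST q :: 'a vec3 set set set).
         (cat1 X \<longrightarrow> cat1 (phi q ` X))
       \<and> (cat2 q X \<longrightarrow> cat2 q (phi q ` X))
       \<and> (cat3 q X \<longrightarrow> cat3 q (phi q ` X))
       \<and> (cat4 q X \<longrightarrow> cat4 q (phi q ` X))
       \<and> (cat5 q X \<longrightarrow> cat5 q (phi q ` X))
       \<and> (cat6 q X \<longrightarrow> cat6 q (phi q ` X))
       \<and> (cat7 q X \<longrightarrow> cat7 q (phi q ` X)))"
proof -
  obtain p k where p: "prime p" and q: "q = p ^ k"
    using assms(1) by blast
  interpret cubic_frobenius q "TYPE('a)"
  proof
    show "x ^ (q ^ 3) = x" for x :: 'a
      using finite_field_power_card[of x] assms(2) by simp
    have "card (UNIV :: 'a set) = p ^ (k * 3)"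
      using assms(2) q by (simp add: power_mult)
    then show "(x + y) ^ q = x ^ q + y ^ q" for x y :: 'a
      using frobenius_additive p q by blast
  qed
  show ?thesis
    using bij_betw_phi_image_orbST cat1_phi_image cat2_phi_image cat3_phi_image cat4_phi_image
      cat5_phi_image cat6_phi_image cat7_phi_image
    by blast
qed

end
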